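(* Let $h\ge1$, $\omega=e^{2\pi\mathrm{i}/h}$, and consider walks with steps in $\{\pm1,\dots,\pm h\}$. For $k\ge1$ and $n\ge0$, the number of positive walks of length $n$ from the origin to altitude $k$ (walks $0=y_0,\dots,y_n=k$ with $y_i\ge1$ for $1\le i\le n$) and the number of positive meanders of length $n$ (walks $0=y_0,\dots,y_n$ with $y_i\ge1$ for $1\le i\le n$) are respectively $$[z^n]G_{0,k}(z)=\sum_{n_1+\dots+n_h=nh}\ \sum_{i_1+\dots+i_h=k}\ \prod_{j=1}^h\frac{i_j}{n_j}\binom{n_j/h}{n_j-i_j}^{*}_{2h}\ \omega^{\sum_{j=1}^h(j-1)n_j},$$ $$[z^n]M_{>0}(z)=\sum_{n_1+\dots+n_h=nh}\ \sum_{i_1,\dots,i_h\ge0}\ \prod_{j=1}^h\frac{i_j}{n_j}\binom{n_j/h}{n_j-i_j}^{*}_{2h}\ \omega^{\sum_{j=1}^h(j-1)n_j},$$ where all $n_j,i_j$ range over nonnegative integers.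
   Context: For real $\alpha$ and integer $k$, $\binom{\alpha}{k}^{*}_{2h}:=[u^k](1+u+\dots+u^{h-1}+u^{h+1}+\dots+u^{2h})^{\alpha}$ (formal power series with constant term $1$; $0$ for $k<0$). In the products, the factor $\frac{i}{n}\binom{n/h}{n-i}^{*}_{2h}$ stands for $[z^n]U^i(z)$, where $U(z)=z+\cdots$ is the power series root of $1-z^h(U^{-h}+\dots+U^{-1}+U+\dots+U^{h})=0$; concretely it equals $1$ if $i=n=0$ and $0$ if exactly one of $i,n$ is $0$. *)

theory Defs
  imports "HOL-Analysis.Analysis" "HOL-Computational_Algebra.Formal_Power_Series"
begin

definition stepP_minus1 :: "nat \<Rightarrow> real fps" where
  "stepP_minus1 h = Abs_fps (\<lambda>j. if 1 \<le> j \<and> j \<le> 2*h \<and> j \<noteq> h then 1 else 0)"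

definition stepP_pow :: "nat \<Rightarrow> real \<Rightarrow> real fps" where
  "stepP_pow h \<alpha> = fps_binomial \<alpha> oo stepP_minus1 h"

definition gbinom2h :: "nat \<Rightarrow> real \<Rightarrow> int \<Rightarrow> real" where
  "gbinom2h h \<alpha> k = (if k < 0 then 0 else fps_nth (stepP_pow h \<alpha>) (nat k))"

definition Ucoef :: "nat \<Rightarrow> nat \<Rightarrow> nat \<Rightarrow> complex" where
  "Ucoef h n i =
     (if n = 0 \<and> i = 0 then 1
      else if n = 0 \<or> i = 0 then 0
      else complex_of_real (real i / real n * gbinom2h h (real n / real h) (int n - int i)))"

definition step_set :: "nat \<Rightarrow> int set" where
  "step_set h = {d. 1 \<le> \<bar>d\<bar> \<and> \<bar>d\<bar> \<le> int h}"

text \<open>Walks given by their step lists; y_i = sum of the first i steps.\<close>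
definition pos_walks :: "nat \<Rightarrow> nat \<Rightarrow> int \<Rightarrow> int list set" where
  "pos_walks h n k = {s. length s = n \<and> set s \<subseteq> step_set h \<and>
      (\<forall>i\<in>{1..n}. sum_list (take i s) \<ge> 1) \<and> sum_list s = k}"

definition pos_meanders :: "nat \<Rightarrow> nat \<Rightarrow> int list set" where
  "pos_meanders h n = {s. length s = n \<and> set s \<subseteq> step_set h \<and>
      (\<forall>i\<in>{1..n}. sum_list (take i s) \<ge> 1)}"

end

theory Submission
  imports Defs "HOL-Computational_Algebra.Formal_Laurent_Series" "HOL-Computational_Algebra.Polynomial_FPS"
begin

(* Work with a variable x such that z = x^h, so that [z^n] becomes [x^(n h)], and encode a step
   d by the exponent d + h; then P(u) = 1 + Q(u) is the sum of u^e over the step exponents e.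
   The series U = x P(U)^(1/h) solves U^h = x^h P(U), and Lagrange inversion gives
   [x^n] U^i = (i/n) [u^(n-i)] P(u)^(n/h), the factor Ucoef of the formula.
   The rotations u_j(x) = U(omega^j x), j < h, are h distinct roots of the kernel polynomial
   K(v) = v^h - x^h P(v), which is palindromic of degree 2h; hence
   K(v) = (prod_j (1 - u_j v)) B(v) with deg B <= h. Multiplying G(v) = prod_j 1/(1 - u_j v)
   by K therefore leaves a polynomial of degree at most h, which says that the coefficients
   G_m satisfy G_m = x^h (sum_e G_(m+h-e)) for m >= 1. Together with G_0 = 1 this is the
   recursion of positive walks by their last step, so [x^(n h)] G_k counts positive walks of
   length n ending at k. Expanding the product of geometric series gives the formula, and
   meanders are the walks ending at some k <= n h. *)

lemma fps_prod_lessThan_nth: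
  fixes f :: "nat \<Rightarrow> 'a::comm_ring_1 fps"
  shows "(\<Prod>j<h. f j) $ N = (\<Sum>ns\<in>natpermute N h. \<Prod>j<h. f j $ (ns ! j))"
proof (cases h)
  case 0
  then show ?thesis by (simp add: natpermute_0)
next
  case (Suc m)
  then have "{..<h} = {0..m}" by auto
  then show ?thesis using fps_prod_nth[of f m N] Suc by simp
qed

lemma infsum_lists_bounded_sum:
  fixes f :: "nat list \<Rightarrow> 'a::{comm_monoid_add, t2_space}"
  assumes "\<And>is. length is = h \<Longrightarrow> f is \<noteq> 0 \<Longrightarrow> sum_list is \<le> N"
  shows "(\<Sum>\<^sub>\<infinity>is\<in>{is. length is = h}. f is) = (\<Sum>k\<le>N. \<Sum>is\<in>natpermute k h. f is)"
proof -
  define S where "S = (\<Union>k\<le>N. natpermute k h)"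
  have "(\<Sum>k\<le>N. \<Sum>is\<in>natpermute k h. f is) = (\<Sum>is\<in>S. f is)"
    unfolding S_def by (rule sum.UNION_disjoint[symmetric])
      (simp_all add: natpermute_finite, auto simp: natpermute_def)
  also have "\<dots> = (\<Sum>\<^sub>\<infinity>is\<in>S. f is)"
    by (simp add: S_def natpermute_finite)
  also have "\<dots> = (\<Sum>\<^sub>\<infinity>is\<in>{is. length is = h}. f is)"
    by (rule infsum_cong_neutral) (use assms in \<open>auto simp: S_def natpermute_def\<close>)
  finally show ?thesis ..
qed

section \<open>Lagrange inversion\<close>

lemma fps_cutoff_conv_sum: "fps_cutoff n f = (\<Sum>m<n. fps_const (f $ m) * fps_X ^ m)"
proof (rule fps_ext)
  fix k
  have "(\<Sum>m<n. fps_const (f $ m) * fps_X ^ m) $ k = (\<Sum>m<n. if k = m then f $ m else 0)"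
    by (simp add: fps_sum_nth fps_X_power_nth if_distrib cong: if_cong)
  then show "fps_cutoff n f $ k = (\<Sum>m<n. fps_const (f $ m) * fps_X ^ m) $ k"
    by (simp add: sum.delta')
qed

lemma fps_compose_eq_truncation_plus_remainder:
  fixes F W :: "'a::idom fps"
  assumes "W $ 0 = 0"
  shows "F oo W = (\<Sum>m\<le>n. fps_const (F $ m) * W ^ m) + (fps_shift (Suc n) F oo W) * W ^ Suc n"
proof -
  have "(\<Sum>m\<le>n. fps_const (F $ m) * fps_X ^ m) + fps_shift (Suc n) F * fps_X ^ Suc n = F"
    using fps_shift_cutoff[of "Suc n" F]
    by (simp only: fps_cutoff_conv_sum lessThan_Suc_atMost add.commute)
  then have "F oo W = ((\<Sum>m\<le>n. fps_const (F $ m) * fps_X ^ m) + fps_shift (Suc n) F * fps_X ^ Suc n) oo W"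
    by (rule arg_cong[symmetric])
  then show ?thesis
    by (simp add: fps_compose_add_distrib fps_compose_sum_distrib fps_compose_mult_distrib[OF assms]
        fps_compose_power[OF assms, symmetric] assms del: power_Suc)
qed

lemma fps_to_fls_sum: "fps_to_fls (\<Sum>x\<in>A. f x) = (\<Sum>x\<in>A. fps_to_fls (f x))"
  by (induction A rule: infinite_finite_induct) auto

lemma inverse_fps_to_fls_X_times_inverse:
  fixes \<phi> :: "'a::field fps"
  assumes "\<phi> $ 0 \<noteq> 0"
  shows "inverse (fps_to_fls (fps_X * inverse \<phi>)) = fls_X_inv * fps_to_fls \<phi>"
proof (rule inverse_unique)
  have "inverse \<phi> * \<phi> = 1"
    using assms by (simp add: inverse_mult_eq_1)
  then show "fps_to_fls (fps_X * inverse \<phi>) * (fls_X_inv * fps_to_fls \<phi>) = 1"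
    by (simp add: fls_times_fps_to_fls[symmetric] fls_X_times_conv_shift algebra_simps)
qed

lemma fls_residue_deriv_times_inverse_power:
  fixes w :: "'a::field_char_0 fls"
  shows "fls_residue (fls_deriv w * inverse w ^ k) = (if k = 1 then of_int (fls_subdegree w) else 0)"
proof (cases "k \<ge> 2")
  case True
  then obtain j where k: "k = Suc (Suc j)" by (metis add_2_eq_Suc le_Suc_ex)
  define v where "v = inverse w"
  have "fls_deriv (v ^ Suc j) = of_nat (Suc j) * v ^ j * fls_deriv v"
    by (subst fls_deriv_power) simp
  also have "fls_deriv v = - v * fls_deriv w * v"
    by (simp add: v_def fls_inverse_deriv_divring)
  finally have "fls_deriv (v ^ Suc j) = - (of_nat (Suc j) * (fls_deriv w * v ^ k))"
    by (simp add: k algebra_simps)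
  moreover have "fls_residue (fls_deriv (v ^ Suc j)) = 0" by (rule fls_residue_deriv)
  ultimately have "of_nat (Suc j) * fls_residue (fls_deriv w * v ^ k) = 0"
    by (simp only: fls_residue_def fls_uminus_nth fls_mult_of_nat_nth neg_equal_0_iff_equal)
  then have "fls_residue (fls_deriv w * v ^ k) = 0"
    by (metis mult_eq_0_iff of_nat_neq_0)
  then show ?thesis using True by (simp add: v_def)
next
  case False
  then consider "k = 0" | "k = 1" by linarith
  then show ?thesis
    by cases (use fls_residue_deriv_times_inverse_eq_subdegree(1)[of w] in simp_all)
qed

lemma fls_residue_deriv_power_times_inverse_power:
  fixes w :: "'a::field_char_0 fls"
  assumes "m \<le> n" and "w \<noteq> 0"
  shows "fls_residue (fls_deriv (w ^ m) * inverse w ^ n) =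
           (if m = n then of_nat n * of_int (fls_subdegree w) else 0)"
proof (cases m)
  case 0
  then show ?thesis using assms by simp
next
  case (Suc l)
  have "n = l + (n - m + 1)" using assms Suc by simp
  then have "inverse w ^ n = inverse w ^ l * inverse w ^ (n - m + 1)"
    by (metis power_add)
  then have "w ^ l * inverse w ^ n = (w * inverse w) ^ l * inverse w ^ (n - m + 1)"
    by (simp add: power_mult_distrib)
  then have "w ^ l * inverse w ^ n = inverse w ^ (n - m + 1)"
    using assms by simp
  moreover have "fls_deriv (w ^ m) = of_nat m * w ^ l * fls_deriv w"
    by (subst fls_deriv_power) (simp add: Suc)
  ultimately have "fls_deriv (w ^ m) * inverse w ^ n = of_nat m * (fls_deriv w * inverse w ^ (n - m + 1))"
    by (simp add: algebra_simps)
  then have "fls_residue (fls_deriv (w ^ m) * inverse w ^ n) =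
      of_nat m * fls_residue (fls_deriv w * inverse w ^ (n - m + 1))"
    by (simp only: fls_residue_def fls_mult_of_nat_nth)
  also have "\<dots> = of_nat m * (if n - m + 1 = 1 then of_int (fls_subdegree w) else 0)"
    by (simp only: fls_residue_deriv_times_inverse_power)
  finally show ?thesis using assms by auto
qed

lemma fls_residue_deriv_times_power_Suc_eq_0:
  fixes C W :: "'a::field_char_0 fps"
  assumes "W \<noteq> 0"
  shows "fls_residue (fls_deriv (fps_to_fls C * fps_to_fls W ^ Suc n) * inverse (fps_to_fls W) ^ n) = 0"
proof -
  define R where "R = fps_deriv C * W + fps_const (of_nat (Suc n)) * C * fps_deriv W"
  have "fps_deriv (W ^ Suc n) = fps_const (of_nat (Suc n)) * fps_deriv W * W ^ n"
    by (simp only: fps_deriv_power diff_Suc_1)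
  then have "fps_deriv (C * W ^ Suc n) =
      C * (fps_const (of_nat (Suc n)) * fps_deriv W * W ^ n) + fps_deriv C * W ^ Suc n"
    by (simp only: fps_deriv_mult)
  also have "\<dots> = W ^ n * R"
    by (simp add: R_def algebra_simps)
  finally have "fps_deriv (C * W ^ Suc n) = W ^ n * R" .
  then have "fls_deriv (fps_to_fls C * fps_to_fls W ^ Suc n) = fps_to_fls (W ^ n * R)"
    by (simp only: fls_deriv_fps_to_fls fls_times_fps_to_fls[symmetric] fps_to_fls_power[symmetric])
  then have "fls_deriv (fps_to_fls C * fps_to_fls W ^ Suc n) * inverse (fps_to_fls W) ^ n =
      fps_to_fls R * (fps_to_fls W * inverse (fps_to_fls W)) ^ n"
    by (simp only: fls_times_fps_to_fls fps_to_fls_power power_mult_distrib mult_ac)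
  also have "\<dots> = fps_to_fls R"
    using assms by simp
  finally show ?thesis by simp
qed

lemma fls_residue_deriv_X_power_times_power:
  fixes f :: "'a::comm_ring_1 fps"
  assumes "i \<le> n"
  shows "fls_residue (fls_deriv (fls_X ^ i) * (fls_X_inv * fps_to_fls f) ^ n) = of_nat i * (f ^ n) $ (n - i)"
proof (cases i)
  case 0
  then show ?thesis by simp
next
  case (Suc l)
  have "fls_deriv (fls_X ^ i) * (fls_X_inv * fps_to_fls f) ^ n =
      of_nat i * fls_X ^ l * (fls_X_inv * fps_to_fls f) ^ n"
    using Suc by (simp only: fls_deriv_X_power diff_Suc_1)
  also have "\<dots> = of_nat i * (fls_X ^ l * (fls_X_inv ^ n * fps_to_fls (f ^ n)))"
    by (simp add: power_mult_distrib fps_to_fls_power algebra_simps)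
  finally have "fls_deriv (fls_X ^ i) * (fls_X_inv * fps_to_fls f) ^ n =
      of_nat i * (fls_X ^ l * (fls_X_inv ^ n * fps_to_fls (f ^ n)))" .
  moreover have "fls_residue (fls_X ^ l * (fls_X_inv ^ n * fps_to_fls (f ^ n))) = (f ^ n) $ (n - i)"
  proof -
    have "- 1 + (int n - int l) = int (n - i)"
      using assms Suc by simp
    then show ?thesis
      by (simp add: fls_X_power_times_conv_shift fls_X_inv_power_times_conv_shift)
  qed
  ultimately show ?thesis
    by (simp only: fls_residue_def fls_mult_of_nat_nth)
qed

(* Write F = U^i as a polynomial in W = x/phi of degree n plus a multiple of W^(n+1), so that
   x^i = F(W); the residue of d(.)/W^n is i [x^(n-i)] phi^n on the left and n [x^n] F on the right. *)
theorem fps_lagrange_inversion: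
  fixes \<phi> :: "'a::field_char_0 fps"
  assumes "\<phi> $ 0 \<noteq> 0" and "i \<le> n"
  shows "of_nat n * (fps_inv (fps_X * inverse \<phi>) ^ i) $ n = of_nat i * (\<phi> ^ n) $ (n - i)"
proof -
  define W where "W = fps_X * inverse \<phi>"
  define F where "F = fps_inv W ^ i"
  define C where "C = fps_shift (Suc n) F oo W"
  define w where "w = fps_to_fls W"
  have W0: "W $ 0 = 0" and W1: "W $ 1 \<noteq> 0"
    using assms(1) by (simp_all add: W_def)
  have "subdegree W = 1"
    using W0 W1 by (intro subdegreeI) (auto simp: less_Suc_eq)
  then have w_subdegree: "fls_subdegree w = 1" and "W \<noteq> 0"
    by (auto simp: w_def fls_subdegree_fls_to_fps)
  then have "w \<noteq> 0" by (simp add: w_def)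
  have "F oo W = (\<Sum>m\<le>n. fps_const (F $ m) * W ^ m) + C * W ^ Suc n"
    unfolding C_def using W0 by (rule fps_compose_eq_truncation_plus_remainder)
  moreover have "F oo W = fps_X ^ i"
    using fps_inv[OF W0 W1] by (simp add: F_def fps_compose_power[OF W0, symmetric])
  ultimately have "fps_to_fls (fps_X ^ i) =
      fps_to_fls ((\<Sum>m\<le>n. fps_const (F $ m) * W ^ m) + C * W ^ Suc n)"
    by simp
  then have "fls_X ^ i = (\<Sum>m\<le>n. fls_const (F $ m) * w ^ m) + fps_to_fls C * w ^ Suc n"
    by (simp only: w_def fps_to_fls_plus fps_to_fls_sum fls_times_fps_to_fls fps_const_to_fls
        fps_to_fls_power fps_X_to_fls)
  then have "fls_residue (fls_deriv (fls_X ^ i) * inverse w ^ n) =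
      (\<Sum>m\<le>n. F $ m * fls_residue (fls_deriv (w ^ m) * inverse w ^ n))
      + fls_residue (fls_deriv (fps_to_fls C * w ^ Suc n) * inverse w ^ n)"
    by (simp only: fls_residue_def fls_deriv_add fls_deriv_sum fls_deriv_mult_const_left
        distrib_right sum_distrib_right fls_plus_nth fls_nth_sum mult.assoc fls_mult_const_nth)
  also have "\<dots> = (\<Sum>m\<le>n. F $ m * (if m = n then of_nat n else 0))"
    using \<open>w \<noteq> 0\<close> fls_residue_deriv_times_power_Suc_eq_0[OF \<open>W \<noteq> 0\<close>, of C n, folded w_def]
    by (simp add: fls_residue_deriv_power_times_inverse_power w_subdegree cong: if_cong
        del: fls_residue_def)
  also have "\<dots> = of_nat n * F $ n"
    by (simp add: if_distrib cong: if_cong)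
  finally have "of_nat n * F $ n = fls_residue (fls_deriv (fls_X ^ i) * inverse w ^ n)" ..
  also have "inverse w = fls_X_inv * fps_to_fls \<phi>"
    unfolding w_def W_def using assms(1) by (rule inverse_fps_to_fls_X_times_inverse)
  finally show ?thesis
    using fls_residue_deriv_X_power_times_power[OF assms(2)] by (simp add: F_def W_def)
qed

lemma fps_inv_X_times_inverse_fixpoint:
  fixes \<phi> :: "'a::field_char_0 fps"
  assumes "\<phi> $ 0 \<noteq> 0"
  shows "fps_inv (fps_X * inverse \<phi>) = fps_X * (\<phi> oo fps_inv (fps_X * inverse \<phi>))"
proof -
  define W where "W = fps_X * inverse \<phi>"
  define U where "U = fps_inv W"
  have U0: "U $ 0 = 0" by (simp add: U_def fps_inv_def)
  have "W oo U = fps_X"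
    unfolding U_def by (rule fps_inv_right) (use assms in \<open>simp_all add: W_def\<close>)
  moreover have "W oo U = U * inverse (\<phi> oo U)"
    by (simp add: W_def fps_compose_mult_distrib[OF U0] fps_inverse_compose[OF U0 assms] U0)
  ultimately have "U * inverse (\<phi> oo U) = fps_X" by simp
  moreover have "inverse (\<phi> oo U) * (\<phi> oo U) = 1"
    using assms by (intro inverse_mult_eq_1) (simp add: U_def W_def fps_compose_nth_0 fps_inv_def)
  ultimately have "U = fps_X * (\<phi> oo U)"
    by (metis mult.assoc mult.right_neutral)
  then show ?thesis by (simp add: U_def W_def)
qed

section \<open>The small roots of the kernel\<close>

(* The step d of step_set h is encoded by the exponent d + h. *)
definition step_exponents :: "nat \<Rightarrow> nat set" where
  "step_exponents h = {..2 * h} - {h}"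

lemma finite_step_exponents [simp]: "finite (step_exponents h)"
  by (simp add: step_exponents_def)

lemma stepP_pow_nth_0 [simp]: "stepP_pow h a $ 0 = 1"
  by (simp add: stepP_pow_def stepP_minus1_def)

lemma stepP_pow_power: "stepP_pow h a ^ m = stepP_pow h (of_nat m * a)"
  by (simp add: stepP_pow_def stepP_minus1_def fps_compose_power fps_binomial_power)

lemma stepP_pow_1:
  assumes "h \<ge> 1"
  shows "stepP_pow h 1 = (\<Sum>e\<in>step_exponents h. fps_X ^ e)"
proof (rule fps_ext)
  fix k
  have "(\<Sum>e\<in>step_exponents h. fps_X ^ e :: real fps) $ k = (if k \<in> step_exponents h then 1 else 0)"
    by (simp add: fps_sum_nth fps_X_power_nth sum.delta' cong: if_cong)
  moreover have "stepP_pow h 1 = 1 + stepP_minus1 h"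
    by (simp add: stepP_pow_def fps_binomial_1 fps_compose_add_distrib stepP_minus1_def)
  ultimately show "stepP_pow h 1 $ k = (\<Sum>e\<in>step_exponents h. fps_X ^ e :: real fps) $ k"
    using assms by (cases "k = 0") (auto simp: stepP_minus1_def step_exponents_def)
qed

(* The compositional inverse of x/phi solves U = x phi(U); here phi = P^(1/h). *)
definition kernel_root :: "nat \<Rightarrow> real fps" where
  "kernel_root h = fps_inv (fps_X * inverse (stepP_pow h (1 / real h)))"

lemma kernel_root_nth_0 [simp]: "kernel_root h $ 0 = 0"
  and kernel_root_nth_1 [simp]: "kernel_root h $ 1 = 1"
  by (simp_all add: kernel_root_def fps_inv_def)

lemma Ucoef_eq_kernel_root_power_nth: "Ucoef h m i = complex_of_real ((kernel_root h ^ i) $ m)"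
proof (cases "m = 0 \<or> i = 0 \<or> m < i")
  case True
  then show ?thesis
    using startsby_zero_power_prefix[of "kernel_root h" i]
    by (cases i) (auto simp: Ucoef_def gbinom2h_def)
next
  case False
  then have "real m * (kernel_root h ^ i) $ m = real i * stepP_pow h (real m / real h) $ (m - i)"
    using fps_lagrange_inversion[of "stepP_pow h (1 / real h)" i m]
    by (simp add: kernel_root_def stepP_pow_power)
  then have "(kernel_root h ^ i) $ m = real i / real m * stepP_pow h (real m / real h) $ (m - i)"
    using False by (simp add: field_simps)
  then show ?thesis
    using False by (simp add: Ucoef_def gbinom2h_def nat_diff_distrib of_nat_diff)
qed

lemma Ucoef_eq_0: "m < i \<Longrightarrow> Ucoef h m i = 0"
  by (simp add: Ucoef_def gbinom2h_def)

lemma prod_Ucoef_eq_0: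
  assumes "length ns = h" and "length is = h" and "sum_list ns < sum_list is"
  shows "(\<Prod>j<h. Ucoef h (ns ! j) (is ! j)) = 0"
proof -
  have "\<not> (\<forall>j<h. is ! j \<le> ns ! j)"
  proof
    assume "\<forall>j<h. is ! j \<le> ns ! j"
    then have "(\<Sum>j<h. is ! j) \<le> (\<Sum>j<h. ns ! j)"
      by (intro sum_mono) simp
    then show False
      using assms by (simp add: sum_list_sum_nth atLeast0LessThan)
  qed
  then obtain j where "j < h" and "ns ! j < is ! j"
    by (auto simp: not_le)
  then show ?thesis
    by (intro prod_zero bexI[of _ j]) (auto simp: Ucoef_eq_0)
qed

lemma kernel_root_equation:
  assumes "h \<ge> 1"
  shows "kernel_root h ^ h = fps_X ^ h * (\<Sum>e\<in>step_exponents h. kernel_root h ^ e)"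
proof -
  define \<phi> where "\<phi> = stepP_pow h (1 / real h)"
  have "\<phi> ^ h = (\<Sum>e\<in>step_exponents h. fps_X ^ e)"
    using assms by (simp add: \<phi>_def stepP_pow_power stepP_pow_1)
  moreover have "kernel_root h = fps_X * (\<phi> oo kernel_root h)"
    unfolding kernel_root_def \<phi>_def by (rule fps_inv_X_times_inverse_fixpoint) simp
  then have "kernel_root h ^ h = fps_X ^ h * (\<phi> ^ h oo kernel_root h)"
    by (metis fps_compose_power kernel_root_nth_0 power_mult_distrib)
  ultimately show ?thesis
    by (simp add: fps_compose_sum_distrib fps_compose_power[symmetric])
qed

definition fps_scale_of_real :: "'a::{real_algebra_1, comm_ring_1} \<Rightarrow> real fps \<Rightarrow> 'a fps" where
  "fps_scale_of_real c f = Abs_fps (\<lambda>m. c ^ m * of_real (f $ m))"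

lemma fps_scale_of_real_nth [simp]: "fps_scale_of_real c f $ m = c ^ m * of_real (f $ m)"
  by (simp add: fps_scale_of_real_def)

lemma fps_scale_of_real_mult: "fps_scale_of_real c (f * g) = fps_scale_of_real c f * fps_scale_of_real c g"
proof (rule fps_ext)
  fix m
  have "(fps_scale_of_real c f * fps_scale_of_real c g) $ m =
      (\<Sum>i=0..m. (c ^ i * c ^ (m - i)) * (of_real (f $ i) * of_real (g $ (m - i))))"
    by (simp add: fps_mult_nth algebra_simps)
  also have "\<dots> = (\<Sum>i=0..m. c ^ m * (of_real (f $ i) * of_real (g $ (m - i))))"
    by (intro sum.cong refl) (auto simp flip: power_add)
  also have "\<dots> = fps_scale_of_real c (f * g) $ m"
    by (simp add: fps_mult_nth sum_distrib_left)
  finally show "fps_scale_of_real c (f * g) $ m = (fps_scale_of_real c f * fps_scale_of_real c g) $ m" ..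
qed

lemma fps_scale_of_real_power: "fps_scale_of_real c (f ^ k) = fps_scale_of_real c f ^ k"
proof (induction k)
  case 0
  show ?case by (rule fps_ext) simp
qed (simp add: fps_scale_of_real_mult)

lemma fps_scale_of_real_sum: "fps_scale_of_real c (\<Sum>x\<in>A. f x) = (\<Sum>x\<in>A. fps_scale_of_real c (f x))"
  by (rule fps_ext) (simp add: fps_sum_nth sum_distrib_left)

lemma fps_scale_of_real_X_power: "fps_scale_of_real c (fps_X ^ k) = fps_const (c ^ k) * fps_X ^ k"
  by (rule fps_ext) (simp add: fps_X_power_nth)

definition root_unity :: "nat \<Rightarrow> complex" where
  "root_unity h = exp (2 * complex_of_real pi * \<i> / of_nat h)"

lemma root_unity_power: "root_unity h ^ j = exp (2 * of_real pi * \<i> * of_nat j / of_nat h)"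
  by (simp add: root_unity_def exp_of_nat_mult[symmetric] algebra_simps)

lemma root_unity_power_self: "h \<ge> 1 \<Longrightarrow> root_unity h ^ h = 1"
  by (simp add: root_unity_power)

lemma inj_on_root_unity_power: "h \<ge> 1 \<Longrightarrow> inj_on (\<lambda>j. root_unity h ^ j) {..<h}"
  by (rule inj_onI) (simp add: root_unity_power complex_root_unity_eq)

definition small_root :: "nat \<Rightarrow> nat \<Rightarrow> complex fps" where
  "small_root h j = fps_scale_of_real (root_unity h ^ j) (kernel_root h)"

lemma small_root_power_nth: "(small_root h j ^ i) $ m = root_unity h ^ (j * m) * Ucoef h m i"
  by (simp add: small_root_def fps_scale_of_real_power[symmetric] Ucoef_eq_kernel_root_power_nth
      power_mult)

lemma small_root_nth_1: "small_root h j $ 1 = root_unity h ^ j"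
  using kernel_root_nth_1[of h] by (simp add: small_root_def)

lemma small_root_nonzero: "small_root h j \<noteq> 0"
  by (metis small_root_nth_1 fps_zero_nth exp_not_eq_zero power_not_zero root_unity_def)

lemma inj_on_small_root: "h \<ge> 1 \<Longrightarrow> inj_on (small_root h) {..<h}"
  by (rule inj_onI) (metis small_root_nth_1 inj_on_root_unity_power inj_onD)

lemma small_root_equation:
  assumes "h \<ge> 1"
  shows "small_root h j ^ h = fps_X ^ h * (\<Sum>e\<in>step_exponents h. small_root h j ^ e)"
proof -
  have "(root_unity h ^ j) ^ h = 1"
    using root_unity_power_self[OF assms] by (metis mult.commute power_mult power_one)
  then show ?thesis
    using kernel_root_equation[OF assms]
    by (simp add: small_root_def fps_scale_of_real_power[symmetric] fps_scale_of_real_mult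
        fps_scale_of_real_sum fps_scale_of_real_X_power)
qed

section \<open>The kernel method\<close>

lemma prod_linear_factors_dvd:
  fixes p :: "'a::idom poly"
  assumes "finite A" and "inj_on r A" and "\<And>a. a \<in> A \<Longrightarrow> poly p (r a) = 0"
  shows "(\<Prod>a\<in>A. [:- r a, 1:]) dvd p"
  using assms
proof (induction A arbitrary: p rule: finite_induct)
  case empty
  then show ?case by simp
next
  case (insert a A)
  have "[:- r a, 1:] dvd p"
    using insert.prems(2) by (simp add: dvd_iff_poly_eq_0)
  then obtain q where q: "p = [:- r a, 1:] * q" by (elim dvdE)
  have "poly q (r b) = 0" if "b \<in> A" for b
  proof -
    have "r b \<noteq> r a"
      using insert.prems(1) insert.hyps(2) that by (auto simp: inj_on_def)
    then show ?thesis using insert.prems(2)[of b] that by (simp add: q)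
  qed
  then have "(\<Prod>a\<in>A. [:- r a, 1:]) dvd q"
    using insert.IH insert.prems(1) by (auto intro: inj_on_subset)
  then have "[:- r a, 1:] * (\<Prod>a\<in>A. [:- r a, 1:]) dvd p"
    unfolding q by (rule mult_dvd_mono[OF dvd_refl])
  then show ?case
    using insert.hyps by simp
qed

lemma reflect_poly_linear: "u \<noteq> 0 \<Longrightarrow> reflect_poly [:- u, 1:] = [:1, - (u::'a::comm_ring_1):]"
  by (rule poly_eqI) (simp add: coeff_reflect_poly coeff_pCons split: nat.split)

definition kernel_poly :: "nat \<Rightarrow> complex fps poly" where
  "kernel_poly h = monom 1 h - smult (fps_X ^ h) (\<Sum>e\<in>step_exponents h. monom 1 e)"

lemma coeff_kernel_poly:
  "coeff (kernel_poly h) e = (if e = h then 1 else 0) - (if e \<in> step_exponents h then fps_X ^ h else 0)"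
proof -
  have "coeff (\<Sum>e'\<in>step_exponents h. monom (1::complex fps) e') e = (if e \<in> step_exponents h then 1 else 0)"
    by (simp add: coeff_sum coeff_monom sum.delta)
  then show ?thesis by (simp add: kernel_poly_def coeff_monom)
qed

lemma degree_kernel_poly: "h \<ge> 1 \<Longrightarrow> degree (kernel_poly h) = 2 * h"
  by (rule antisym, rule degree_le, auto intro!: le_degree simp: coeff_kernel_poly step_exponents_def)

lemma poly_kernel_poly_small_root: "h \<ge> 1 \<Longrightarrow> poly (kernel_poly h) (small_root h j) = 0"
  by (simp add: kernel_poly_def poly_sum poly_monom small_root_equation)

lemma reflect_kernel_poly:
  assumes "h \<ge> 1"
  shows "reflect_poly (kernel_poly h) = kernel_poly h"
proof (rule poly_eqI)
  fix e
  have "(2 * h - e = h) = (e = h)" "(2 * h - e \<in> step_exponents h) = (e \<in> step_exponents h)"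
    if "e \<le> 2 * h"
    using that by (auto simp: step_exponents_def)
  then show "coeff (reflect_poly (kernel_poly h)) e = coeff (kernel_poly h) e"
    using assms by (cases "e \<le> 2 * h")
      (simp_all add: coeff_reflect_poly degree_kernel_poly coeff_kernel_poly step_exponents_def)
qed

(* The h distinct small roots give a factor prod_j (v - u_j) of degree h; reflecting, which
   fixes the palindromic kernel polynomial, turns it into prod_j (1 - u_j v). *)
lemma kernel_poly_factorization:
  assumes "h \<ge> 1"
  obtains B where "kernel_poly h = (\<Prod>j<h. [:1, - small_root h j:]) * B" and "degree B \<le> h"
proof -
  define A where "A = (\<Prod>j<h. [:- small_root h j, 1:])"
  have "A dvd kernel_poly h"
    unfolding A_def using assms
    by (intro prod_linear_factors_dvd) (auto simp: inj_on_small_root poly_kernel_poly_small_root)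
  then obtain B where B: "kernel_poly h = A * B" by (elim dvdE)
  have "degree A = h"
    by (simp add: A_def degree_prod_sum_eq)
  moreover have "kernel_poly h \<noteq> 0"
    using degree_kernel_poly[OF assms] assms by auto
  ultimately have "degree B = h"
    using B degree_kernel_poly[OF assms] by (auto simp: degree_mult_eq)
  have "kernel_poly h = reflect_poly A * reflect_poly B"
    by (metis B reflect_kernel_poly[OF assms] reflect_poly_mult)
  also have "reflect_poly A = (\<Prod>j<h. [:1, - small_root h j:])"
    by (simp add: A_def reflect_poly_prod reflect_poly_linear small_root_nonzero)
  finally show ?thesis
    using that degree_reflect_poly_le[of B] \<open>degree B = h\<close> by simp
qed

definition geometric_fps :: "'a::comm_ring_1 \<Rightarrow> 'a fps" where
  "geometric_fps u = Abs_fps (\<lambda>i. u ^ i)"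

lemma fps_of_poly_linear_times_geometric_fps: "fps_of_poly [:1, - u:] * geometric_fps u = 1"
proof (rule fps_ext)
  fix k
  have "fps_of_poly [:1, - u:] * geometric_fps u = geometric_fps u + fps_const (- u) * (fps_X * geometric_fps u)"
    by (simp add: fps_of_poly_pCons algebra_simps)
  then show "(fps_of_poly [:1, - u:] * geometric_fps u) $ k = 1 $ k"
    by (cases k) (simp_all add: geometric_fps_def)
qed

(* The outer variable marks the endpoint of a walk, the inner one (x, with x^h = z) its length. *)
definition walk_gf :: "nat \<Rightarrow> complex fps fps" where
  "walk_gf h = (\<Prod>j<h. geometric_fps (small_root h j))"

lemma walk_gf_nth: "walk_gf h $ m = (\<Sum>is\<in>natpermute m h. \<Prod>j<h. small_root h j ^ (is ! j))"
  by (simp add: walk_gf_def fps_prod_lessThan_nth geometric_fps_def)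

lemma walk_gf_nth_0: "walk_gf h $ 0 = 1"
  by (simp add: walk_gf_nth)

lemma walk_gf_recurrence:
  assumes "h \<ge> 1" and "m \<ge> 1"
  shows "walk_gf h $ m = fps_X ^ h * (\<Sum>e\<in>step_exponents h \<inter> {..m + h}. walk_gf h $ (m + h - e))"
proof -
  obtain B where B: "kernel_poly h = (\<Prod>j<h. [:1, - small_root h j:]) * B" and "degree B \<le> h"
    using kernel_poly_factorization[OF assms(1)] by blast
  have "fps_of_poly (kernel_poly h) * walk_gf h =
      fps_of_poly B * (\<Prod>j<h. fps_of_poly [:1, - small_root h j:] * geometric_fps (small_root h j))"
    by (simp add: B walk_gf_def fps_of_poly_mult fps_of_poly_prod prod.distrib algebra_simps)
  also have "\<dots> = fps_of_poly B"
    by (simp add: fps_of_poly_linear_times_geometric_fps)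
  finally have "(fps_of_poly (kernel_poly h) * walk_gf h) $ (m + h) = 0"
    using \<open>degree B \<le> h\<close> assms(2) by (simp add: fps_of_poly_nth coeff_eq_0)
  moreover have "(fps_of_poly (kernel_poly h) * walk_gf h) $ (m + h) =
      (\<Sum>e=0..m + h. coeff (kernel_poly h) e * walk_gf h $ (m + h - e))"
    by (simp add: fps_mult_nth fps_of_poly_nth)
  moreover have "\<dots> = (\<Sum>e=0..m + h. if e = h then walk_gf h $ (m + h - e) else 0)
      - (\<Sum>e=0..m + h. if e \<in> step_exponents h then fps_X ^ h * walk_gf h $ (m + h - e) else 0)"
    by (subst sum_subtractf[symmetric]) (intro sum.cong refl, auto simp: coeff_kernel_poly algebra_simps)
  moreover have "\<dots> = walk_gf h $ m - fps_X ^ h * (\<Sum>e\<in>step_exponents h \<inter> {..m + h}. walk_gf h $ (m + h - e))"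
    by (simp add: sum.inter_restrict[symmetric] sum_distrib_left Int_commute atLeast0AtMost)
  ultimately show ?thesis by simp
qed

lemma walk_gf_nth_nth:
  "(walk_gf h $ k) $ N =
     (\<Sum>ns\<in>natpermute N h. \<Sum>is\<in>natpermute k h.
        (\<Prod>j<h. Ucoef h (ns ! j) (is ! j)) * root_unity h ^ (\<Sum>j<h. j * ns ! j))"
proof -
  have "(walk_gf h $ k) $ N =
      (\<Sum>is\<in>natpermute k h. \<Sum>ns\<in>natpermute N h. \<Prod>j<h. (small_root h j ^ (is ! j)) $ (ns ! j))"
    by (simp add: walk_gf_nth fps_sum_nth fps_prod_lessThan_nth)
  also have "\<dots> = (\<Sum>is\<in>natpermute k h. \<Sum>ns\<in>natpermute N h.
      (\<Prod>j<h. Ucoef h (ns ! j) (is ! j)) * root_unity h ^ (\<Sum>j<h. j * ns ! j))"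
    by (simp add: small_root_power_nth prod.distrib power_sum mult.commute)
  also have "\<dots> = (\<Sum>ns\<in>natpermute N h. \<Sum>is\<in>natpermute k h.
      (\<Prod>j<h. Ucoef h (ns ! j) (is ! j)) * root_unity h ^ (\<Sum>j<h. j * ns ! j))"
    by (rule sum.swap)
  finally show ?thesis .
qed

section \<open>Counting walks and meanders\<close>

lemma finite_step_set [simp]: "finite (step_set h)"
proof -
  have "step_set h \<subseteq> {- int h..int h}" by (auto simp: step_set_def)
  then show ?thesis by (rule finite_subset) simp
qed

lemma finite_pos_walks [simp]: "finite (pos_walks h n k)"
proof -
  have "pos_walks h n k \<subseteq> {s. set s \<subseteq> step_set h \<and> length s = n}"
    by (auto simp: pos_walks_def)
  then show ?thesis by (rule finite_subset) (simp add: finite_lists_length_eq)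
qed

lemma pos_walks_0: "pos_walks h 0 k = (if k = 0 then {[]} else {})"
  by (auto simp: pos_walks_def)

lemma pos_walks_Suc_nonpos: "k < 1 \<Longrightarrow> pos_walks h (Suc n) k = {}"
  by (force simp: pos_walks_def)

lemma pos_walks_neg: "k < 0 \<Longrightarrow> pos_walks h n k = {}"
  by (cases n) (simp_all add: pos_walks_0 pos_walks_Suc_nonpos)

lemma append_in_pos_walks_iff:
  assumes "k \<ge> 1"
  shows "s @ [d] \<in> pos_walks h (Suc n) k \<longleftrightarrow> d \<in> step_set h \<and> s \<in> pos_walks h n (k - d)"
proof -
  have "(\<forall>i\<in>{1..Suc n}. sum_list (take i (s @ [d])) \<ge> 1) \<longleftrightarrow>
      (\<forall>i\<in>{1..n}. sum_list (take i s) \<ge> 1) \<and> sum_list s + d \<ge> 1" if "length s = n"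
    using that by (auto simp: atLeastAtMostSuc_conv)
  then show ?thesis
    using assms by (auto simp: pos_walks_def)
qed

lemma pos_walks_Suc:
  assumes "k \<ge> 1"
  shows "pos_walks h (Suc n) k = (\<Union>d\<in>step_set h. (\<lambda>s. s @ [d]) ` pos_walks h n (k - d))"
proof (intro equalityI subsetI)
  fix t assume t: "t \<in> pos_walks h (Suc n) k"
  then have "length t = Suc n"
    by (simp add: pos_walks_def)
  then obtain s d where "t = s @ [d]"
    by (metis length_Suc_conv_rev)
  then show "t \<in> (\<Union>d\<in>step_set h. (\<lambda>s. s @ [d]) ` pos_walks h n (k - d))"
    using t append_in_pos_walks_iff[OF assms] by auto
next
  fix t assume "t \<in> (\<Union>d\<in>step_set h. (\<lambda>s. s @ [d]) ` pos_walks h n (k - d))"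
  then obtain d s where "d \<in> step_set h" "s \<in> pos_walks h n (k - d)" "t = s @ [d]"
    by blast
  then show "t \<in> pos_walks h (Suc n) k"
    using append_in_pos_walks_iff[OF assms] by blast
qed

lemma card_pos_walks_Suc:
  assumes "k \<ge> 1"
  shows "card (pos_walks h (Suc n) k) = (\<Sum>d\<in>step_set h. card (pos_walks h n (k - d)))"
proof -
  have "card (pos_walks h (Suc n) k) = (\<Sum>d\<in>step_set h. card ((\<lambda>s. s @ [d]) ` pos_walks h n (k - d)))"
    unfolding pos_walks_Suc[OF assms] by (rule card_UN_disjoint) auto
  then show ?thesis
    by (simp add: card_image inj_on_def)
qed

lemma bij_betw_step_exponents_step_set: "bij_betw (\<lambda>e. int e - int h) (step_exponents h) (step_set h)"
  by (rule bij_betw_byWitness[where f' = "\<lambda>d. nat (d + int h)"])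
    (auto simp: step_exponents_def step_set_def)

lemma card_pos_walks_Suc_step_exponents:
  assumes "m \<ge> 1"
  shows "card (pos_walks h (Suc n) (int m)) =
           (\<Sum>e\<in>step_exponents h \<inter> {..m + h}. card (pos_walks h n (int (m + h - e))))"
proof -
  have "card (pos_walks h (Suc n) (int m)) =
      (\<Sum>e\<in>step_exponents h. card (pos_walks h n (int m - (int e - int h))))"
    using assms card_pos_walks_Suc[of "int m"]
    by (simp add: sum.reindex_bij_betw[OF bij_betw_step_exponents_step_set, symmetric])
  also have "\<dots> = (\<Sum>e\<in>step_exponents h \<inter> {..m + h}. card (pos_walks h n (int m - (int e - int h))))"
    by (rule sum.mono_neutral_right) (auto simp: pos_walks_neg)
  also have "\<dots> = (\<Sum>e\<in>step_exponents h \<inter> {..m + h}. card (pos_walks h n (int (m + h - e))))"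
    by (intro sum.cong refl) (auto simp: of_nat_diff algebra_simps)
  finally show ?thesis .
qed

theorem of_nat_card_pos_walks:
  assumes "h \<ge> 1"
  shows "of_nat (card (pos_walks h n (int m))) = (walk_gf h $ m) $ (n * h)"
proof (induction n arbitrary: m)
  case 0
  then show ?case
    using assms by (simp add: pos_walks_0 walk_gf_nth_0 walk_gf_recurrence fps_X_power_mult_nth)
next
  case (Suc n)
  show ?case
  proof (cases "m = 0")
    case True
    then show ?thesis
      using assms by (simp add: pos_walks_Suc_nonpos walk_gf_nth_0)
  next
    case False
    then have "of_nat (card (pos_walks h (Suc n) (int m))) =
        (\<Sum>e\<in>step_exponents h \<inter> {..m + h}. of_nat (card (pos_walks h n (int (m + h - e)))))"
      by (simp only: card_pos_walks_Suc_step_exponents of_nat_sum)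
    also have "\<dots> = (\<Sum>e\<in>step_exponents h \<inter> {..m + h}. (walk_gf h $ (m + h - e)) $ (n * h))"
      by (simp only: Suc.IH)
    also have "\<dots> = (walk_gf h $ m) $ (Suc n * h)"
      using assms False by (simp add: walk_gf_recurrence fps_X_power_mult_nth fps_sum_nth)
    finally show ?thesis .
  qed
qed

lemma sum_list_le_length_times_step: "set s \<subseteq> step_set h \<Longrightarrow> sum_list s \<le> int (length s * h)"
  by (induction s) (auto simp: step_set_def)

lemma pos_meanders_eq_Union: "pos_meanders h n = (\<Union>k\<le>n * h. pos_walks h n (int k))"
proof (intro equalityI subsetI)
  fix s assume s: "s \<in> pos_meanders h n"
  then have "sum_list s \<le> int (n * h)"
    using sum_list_le_length_times_step[of s h] by (simp add: pos_meanders_def)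
  moreover have "sum_list s \<ge> 0"
    using s by (cases n) (force simp: pos_meanders_def)+
  ultimately have "s \<in> pos_walks h n (int (nat (sum_list s)))" and "nat (sum_list s) \<le> n * h"
    using s by (auto simp: pos_meanders_def pos_walks_def nat_le_iff)
  then show "s \<in> (\<Union>k\<le>n * h. pos_walks h n (int k))" by blast
qed (auto simp: pos_meanders_def pos_walks_def)

lemma card_pos_meanders: "card (pos_meanders h n) = (\<Sum>k\<le>n * h. card (pos_walks h n (int k)))"
  unfolding pos_meanders_eq_Union by (rule card_UN_disjoint) (simp_all, auto simp: pos_walks_def)

theorem theorem4p11:
  fixes h n k :: nat
  assumes "h \<ge> 1" and "k \<ge> 1"
  defines "\<omega> \<equiv> exp (2 * complex_of_real pi * \<i> / of_nat h)"
  shows "of_nat (card (pos_walks h n (int k))) =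
           (\<Sum>ns\<in>{ns. length ns = h \<and> sum_list ns = n * h}.
              \<Sum>is\<in>{is. length is = h \<and> sum_list is = k}.
                (\<Prod>j<h. Ucoef h (ns ! j) (is ! j)) * \<omega> ^ (\<Sum>j<h. j * ns ! j)) \<and>
         of_nat (card (pos_meanders h n)) =
           (\<Sum>ns\<in>{ns. length ns = h \<and> sum_list ns = n * h}.
              \<Sum>\<^sub>\<infinity>is\<in>{is. length is = h}.
                (\<Prod>j<h. Ucoef h (ns ! j) (is ! j)) * \<omega> ^ (\<Sum>j<h. j * ns ! j))"
proof -
  define T where "T ns is = (\<Prod>j<h. Ucoef h (ns ! j) (is ! j)) * \<omega> ^ (\<Sum>j<h. j * ns ! j)" for ns "is"
  have walks: "of_nat (card (pos_walks h n (int m))) =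
      (\<Sum>ns\<in>natpermute (n * h) h. \<Sum>is\<in>natpermute m h. T ns is)" for m
    using assms(1) by (simp add: of_nat_card_pos_walks walk_gf_nth_nth T_def \<omega>_def root_unity_def)
  have "of_nat (card (pos_meanders h n)) =
      (\<Sum>m\<le>n * h. \<Sum>ns\<in>natpermute (n * h) h. \<Sum>is\<in>natpermute m h. T ns is)"
    by (simp add: card_pos_meanders walks)
  also have "\<dots> = (\<Sum>ns\<in>natpermute (n * h) h. \<Sum>m\<le>n * h. \<Sum>is\<in>natpermute m h. T ns is)"
    by (rule sum.swap)
  also have "\<dots> = (\<Sum>ns\<in>natpermute (n * h) h. \<Sum>\<^sub>\<infinity>is\<in>{is. length is = h}. T ns is)"
  proof (intro sum.cong refl infsum_lists_bounded_sum[symmetric])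
    fix ns "is"
    assume "ns \<in> natpermute (n * h) h" and "length is = h" and "T ns is \<noteq> 0"
    then show "sum_list is \<le> n * h"
      using prod_Ucoef_eq_0[of ns h "is"] by (force simp: T_def natpermute_def)
  qed
  finally show ?thesis
    using walks[of k] by (simp add: T_def natpermute_def)
qed

end
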